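(* If MAPTree is run without a time budget, the binary decision tree corresponding to its output solution graph is a maximum a posteriori tree, i.e. it maximizes $P(T\mid\mathcal X,\mathcal Y)\propto P(\mathcal Y\mid\mathcal X,T)\,P(T\mid\mathcal X)$ over binary decision trees $T$ on $\mathcal X$ all of whose nodes are reached by at least one sample.
   Context: Let $x_1,\dots,x_N\in\{0,1\}^F$ be a binary dataset $\mathcal X$ with labels $\mathcal Y\in\{0,1\}^N$, $[N]=\{1,\dots,N\}$. For $\mathcal I\subseteq[N]$, $f\in[F]$, $k\in\{0,1\}$ let $\mathcal I|_{f=k}=\{i\in\mathcal I:(x_i)_f=k\}$, $c^k(\mathcal I)=|\{i\in\mathcal I:y_i=k\}|$, $\mathcal V(\mathcal I)=\{f:\mathcal I|_{f=0}\neq\emptyset\text{ and }\mathcal I|_{f=1}\neq\emptyset\}$. Fix $\rho^1,\rho^0>0$, $\alpha\in(0,1)$, $\beta\ge0$; $\ell_{\rm leaf}(c^1,c^0)=B(c^1+\rho^1,c^0+\rho^0)/B(\rho^1,\rho^0)$ ($B$ the Beta function), $p_{\rm split}(d)=\alpha(1+d)^{-\beta}$, $p_{\rm leaf}(d,\mathcal I)=1$ if $\mathcal V(\mathcal I)=\emptyset$ else $1-p_{\rm split}(d)$, $p_{\rm inner}(d,\mathcal I)=0$ if $\mathcal V(\mathcal I)=\emptyset$ else $p_{\rm split}(d)/|\mathcal V(\mathcal I)|$; $-\log0=+\infty$, and a minimum over an empty set is $+\infty$. Trees: a binary decision tree $T$ on $\mathcal X$ is a finite rooted tree whose internal nodes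 $m$ carry features $f(m)\in[F]$ and have a $0$-child and a $1$-child; $d(n)$ is depth (root $0$), $\mathcal I(\mathrm{root})=[N]$, the $k$-child of $m$ has $\mathcal I(m)|_{f(m)=k}$. $P(T\mid\mathcal X)=\prod_{l\text{ leaf}}p_{\rm leaf}(d(l),\mathcal I(l))\prod_{m\text{ internal}}p_{\rm inner}(d(m),\mathcal I(m))$ and $P(\mathcal Y\mid\mathcal X,T)=\prod_{l\text{ leaf}}\ell_{\rm leaf}(c^1(\mathcal I(l)),c^0(\mathcal I(l)))$. Graph $\mathcal G=\mathcal G_{\mathcal X,\mathcal Y}$: for nonempty $\mathcal I\subseteq[N]$, $d\in\{0,\dots,F\}$, an OR node $o_{\mathcal I,d}$ with terminal child $t_{\mathcal I,d}$ (edge cost $-\log p_{\rm leaf}(d,\mathcal I)-\log\ell_{\rm leaf}(c^1(\mathcal I),c^0(\mathcal I))$); for $d<F$, $f\in\mathcal V(\mathcal I)$, an AND child $a_{\mathcal I,d,f}$ (edge cost $-\log p_{\rm inner}(d,\mathcal I)$) with cost-$0$ edges to $o_{\mathcal I|_{f=0},d+1}$, $o_{\mathcal I|_{f=1},d+1}$; root $r=o_{[N],0}$; only nodes reachable from $r$ kept. A solution graph is a node set $\mathcal S\ni r$, all nodes reachable from $r$ inside $\mathcal S$, every AND node of $\mathcal S$ having both children in $\mathcal S$ and every OR node exactly one child in $\mathcal S$. A tree $T$ corresponds to the solution graph $\{o_{\mathcal I(n),d(n)}:n\in T\}\cup\{t_{\mathcal I(n),d(n)}:n\text{ leaf}\}\cup\{a_{\mathcal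 I(m),d(m),f(m)}:m\text{ internal}\}$, and this is a bijection onto solution graphs. Heuristic: $h(o_{\mathcal I,d})=-\max\{\log\ell_{\rm leaf}(c^1(\mathcal I),c^0(\mathcal I)),\log p_{\rm split}(d)+\log\ell_{\rm leaf}(c^1(\mathcal I),0)+\log\ell_{\rm leaf}(0,c^0(\mathcal I))\}$. MAPTree maintains a node set $\mathcal G'$, a set $\mathcal E$ of expanded OR nodes, and values $LB[u],UB[u]\in\mathbb R\cup\{+\infty\}$ for OR nodes ($UB[u]=+\infty$ until set); for an AND node $a$ with children $o_0,o_1$, $LB[a]=LB[o_0]+LB[o_1]$, $UB[a]=UB[o_0]+UB[o_1]$. Initialize $\mathcal G'=\{r\}$, $\mathcal E=\emptyset$, $LB[r]=h(r)$, $UB[r]=+\infty$. While $LB[r]<UB[r]$: (1) $o:=r$; while $o\in\mathcal E$, choose an AND child $a^*$ of $o$ minimizing $\mathrm{cost}(o,a)+LB[a]$, with children $o_0,o_1$, and set $o:=o_0$ if $UB[o_0]-LB[o_0]>UB[o_1]-LB[o_1]$, else $o:=o_1$. (2) Add $o$ to $\mathcal E$ and its terminal child to $\mathcal G'$; for each AND child $a$ of $o$ with children $o_0,o_1$, add $a,o_0,o_1$ to $\mathcal G'$ and set $LB[o_0]:=h(o_0)$, $LB[o_1]:=h(o_1)$. (3) Starting from $Q=\{o\}$, repeatedly remove from $Q$ an OR node $u$ of maximal depth, compute $v=\min\{\min_a(\mathrm{cost}(u,a)+LB[a]),\mathrm{cost}(u,t_u)\}$ over AND children $a$ and terminal child $t_u$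 of $u$; if $v>LB[u]$, set $LB[u]:=v$ and add to $Q$ every OR node of $\mathcal G'$ that is parent of an AND node of $\mathcal G'$ having $u$ as child. (4) The same with $UB$, updating when $v<UB[u]$. Output $\mathrm{getSolution}(r)$: for OR node $u$ with terminal child $t$, if $u$ has no AND child or $\mathrm{cost}(u,t)\le\min_a(\mathrm{cost}(u,a)+UB[a])$ return $\{u,t\}$; else with $a^*$ attaining the minimum and children $u_0,u_1$ return $\{u,a^*\}\cup\mathrm{getSolution}(u_0)\cup\mathrm{getSolution}(u_1)$. *)

theory Defs
  imports "HOL-Analysis.Analysis"
begin

text \<open>Samples are indexed by 1..N, features by 1..F. xx i f is the f-th bit of x_i,
  yy i is the label y_i (True = 1).\<close>

record inst =
  nN :: nat
  nF :: nat
  xx :: "nat \<Rightarrow> nat \<Rightarrow> bool"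
  yy :: "nat \<Rightarrow> bool"
  rho1 :: real
  rho0 :: real
  alpha :: real
  beta :: real

definition restr :: "inst \<Rightarrow> nat set \<Rightarrow> nat \<Rightarrow> bool \<Rightarrow> nat set" where
  "restr P I f k = {i \<in> I. xx P i f = k}"

definition cnt :: "inst \<Rightarrow> bool \<Rightarrow> nat set \<Rightarrow> nat" where
  "cnt P k I = card {i \<in> I. yy P i = k}"

definition valid_feats :: "inst \<Rightarrow> nat set \<Rightarrow> nat set" where
  "valid_feats P I = {f \<in> {1..nF P}. restr P I f False \<noteq> {} \<and> restr P I f True \<noteq> {}}"

definition leaf_lik :: "inst \<Rightarrow> nat \<Rightarrow> nat \<Rightarrow> real" where
  "leaf_lik P c1 c0 = (Beta (real c1 + rho1 P) (real c0 + rho0 P) :: real) / Beta (rho1 P) (rho0 P)"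

definition p_split :: "inst \<Rightarrow> nat \<Rightarrow> real" where
  "p_split P d = alpha P * (1 + real d) powr (- beta P)"

definition p_leaf :: "inst \<Rightarrow> nat \<Rightarrow> nat set \<Rightarrow> real" where
  "p_leaf P d I = (if valid_feats P I = {} then 1 else 1 - p_split P d)"

definition p_inner :: "inst \<Rightarrow> nat \<Rightarrow> nat set \<Rightarrow> real" where
  "p_inner P d I = (if valid_feats P I = {} then 0 else p_split P d / real (card (valid_feats P I)))"

text \<open>Node f t0 t1: internal node testing feature f, with 0-child t0 and 1-child t1.\<close>

datatype dtree = Leaf | Node nat dtree dtree

fun nodes_ok :: "inst \<Rightarrow> nat set \<Rightarrow> dtree \<Rightarrow> bool" where
  "nodes_ok P I Leaf = (I \<noteq> {})"
| "nodes_ok P I (Node f t0 t1) = (I \<noteq> {} \<and> f \<in> {1..nF P} \<and>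
      nodes_ok P (restr P I f False) t0 \<and> nodes_ok P (restr P I f True) t1)"

text \<open>Prior P(T | X) of the subtree rooted at a node with samples I and depth d.\<close>
fun prior :: "inst \<Rightarrow> nat set \<Rightarrow> nat \<Rightarrow> dtree \<Rightarrow> real" where
  "prior P I d Leaf = p_leaf P d I"
| "prior P I d (Node f t0 t1) = p_inner P d I *
      prior P (restr P I f False) (Suc d) t0 * prior P (restr P I f True) (Suc d) t1"

fun lik :: "inst \<Rightarrow> nat set \<Rightarrow> dtree \<Rightarrow> real" where
  "lik P I Leaf = leaf_lik P (cnt P True I) (cnt P False I)"
| "lik P I (Node f t0 t1) = lik P (restr P I f False) t0 * lik P (restr P I f True) t1"

definition unnorm_post :: "inst \<Rightarrow> dtree \<Rightarrow> real" where
  "unnorm_post P T = lik P {1..nN P} T * prior P {1..nN P} 0 T"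

datatype gnode = OrN "nat set" nat | TermN "nat set" nat | AndN "nat set" nat nat

definition ach :: "inst \<Rightarrow> nat set \<Rightarrow> nat \<Rightarrow> nat set" where
  "ach P I d = {f. d < nF P \<and> f \<in> valid_feats P I}"

fun gchildren :: "inst \<Rightarrow> gnode \<Rightarrow> gnode set" where
  "gchildren P (OrN I d) = insert (TermN I d) ((\<lambda>f. AndN I d f) ` ach P I d)"
| "gchildren P (TermN I d) = {}"
| "gchildren P (AndN I d f) = {OrN (restr P I f False) (Suc d), OrN (restr P I f True) (Suc d)}"

definition root :: "inst \<Rightarrow> gnode" where
  "root P = OrN {1..nN P} 0"

inductive_set gnodes :: "inst \<Rightarrow> gnode set" for P where
  "root P \<in> gnodes P"
| "u \<in> gnodes P \<Longrightarrow> v \<in> gchildren P u \<Longrightarrow> v \<in> gnodes P"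

definition mlog :: "real \<Rightarrow> ereal" where
  "mlog p = (if p \<le> 0 then \<infinity> else ereal (- ln p))"

definition cost_term :: "inst \<Rightarrow> nat set \<Rightarrow> nat \<Rightarrow> ereal" where
  "cost_term P I d = mlog (p_leaf P d I) + mlog (leaf_lik P (cnt P True I) (cnt P False I))"

definition cost_and :: "inst \<Rightarrow> nat set \<Rightarrow> nat \<Rightarrow> ereal" where
  "cost_and P I d = mlog (p_inner P d I)"

definition heur :: "inst \<Rightarrow> nat set \<Rightarrow> nat \<Rightarrow> ereal" where
  "heur P I d = ereal (- max (ln (leaf_lik P (cnt P True I) (cnt P False I)))
       (ln (p_split P d) + ln (leaf_lik P (cnt P True I) 0) + ln (leaf_lik P 0 (cnt P False I))))"

fun sol_of_tree :: "inst \<Rightarrow> nat set \<Rightarrow> nat \<Rightarrow> dtree \<Rightarrow> gnode set" where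
  "sol_of_tree P I d Leaf = {OrN I d, TermN I d}"
| "sol_of_tree P I d (Node f t0 t1) = {OrN I d, AndN I d f} \<union>
      sol_of_tree P (restr P I f False) (Suc d) t0 \<union> sol_of_tree P (restr P I f True) (Suc d) t1"

text \<open>State: (G', E, LB, UB). LB and UB are stored for OrN nodes; unset UB is +infinity.\<close>
type_synonym state = "gnode set \<times> gnode set \<times> (gnode \<Rightarrow> ereal) \<times> (gnode \<Rightarrow> ereal)"

definition init_state :: "inst \<Rightarrow> state" where
  "init_state P = ({root P}, {}, (\<lambda>_. 0)(root P := heur P {1..nN P} 0), (\<lambda>_. \<infinity>))"

definition achp :: "inst \<Rightarrow> gnode set \<Rightarrow> nat set \<Rightarrow> nat \<Rightarrow> nat set" where
  "achp P Gp I d = {f \<in> ach P I d. AndN I d f \<in> Gp}"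

definition and_val :: "inst \<Rightarrow> (gnode \<Rightarrow> ereal) \<Rightarrow> nat set \<Rightarrow> nat \<Rightarrow> nat \<Rightarrow> ereal" where
  "and_val P L I d f = L (OrN (restr P I f False) (Suc d)) + L (OrN (restr P I f True) (Suc d))"

definition min_and :: "inst \<Rightarrow> gnode set \<Rightarrow> (gnode \<Rightarrow> ereal) \<Rightarrow> nat set \<Rightarrow> nat \<Rightarrow> ereal" where
  "min_and P Gp L I d = (INF f\<in>achp P Gp I d. cost_and P I d + and_val P L I d f)"

definition node_val :: "inst \<Rightarrow> gnode set \<Rightarrow> (gnode \<Rightarrow> ereal) \<Rightarrow> nat set \<Rightarrow> nat \<Rightarrow> ereal" where
  "node_val P Gp L I d = min (min_and P Gp L I d) (cost_term P I d)"

definition descend :: "inst \<Rightarrow> state \<Rightarrow> nat set \<times> nat \<Rightarrow> nat set \<times> nat \<Rightarrow> bool" where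
  "descend P s u v = (case s of (Gp, E, LB, UB) \<Rightarrow> case u of (I, d) \<Rightarrow>
     OrN I d \<in> E \<and>
     (\<exists>f \<in> achp P Gp I d.
        cost_and P I d + and_val P LB I d f = min_and P Gp LB I d \<and>
        (let o0 = OrN (restr P I f False) (Suc d); o1 = OrN (restr P I f True) (Suc d) in
         v = (if UB o0 - LB o0 > UB o1 - LB o1 then (restr P I f False, Suc d)
              else (restr P I f True, Suc d)))))"

definition expand :: "inst \<Rightarrow> nat set \<Rightarrow> nat \<Rightarrow> state \<Rightarrow> state" where
  "expand P I d s = (case s of (Gp, E, LB, UB) \<Rightarrow>
     (let kids = {OrN (restr P I f k) (Suc d) | f k. f \<in> ach P I d} in
      (Gp \<union> {TermN I d} \<union> (\<lambda>f. AndN I d f) ` ach P I d \<union> kids,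
       insert (OrN I d) E,
       (\<lambda>u. if u \<in> kids then (case u of OrN J e \<Rightarrow> heur P J e | _ \<Rightarrow> LB u) else LB u),
       UB)))"

definition or_parents :: "inst \<Rightarrow> gnode set \<Rightarrow> nat set \<Rightarrow> nat \<Rightarrow> (nat set \<times> nat) set" where
  "or_parents P Gp J e = {(I, d) | I d f. OrN I d \<in> Gp \<and> AndN I d f \<in> Gp \<and>
      OrN J e \<in> gchildren P (AndN I d f)}"

text \<open>Steps (3)/(4): one iteration of the propagation loop; the flag lower selects LB (True)
  or UB (False). Q is the work set of OrN nodes (as pairs (I, d)).\<close>
definition prop_step :: "inst \<Rightarrow> gnode set \<Rightarrow> bool \<Rightarrow>
    (nat set \<times> nat) set \<times> (gnode \<Rightarrow> ereal) \<Rightarrow> (nat set \<times> nat) set \<times> (gnode \<Rightarrow> ereal) \<Rightarrow> bool" where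
  "prop_step P Gp lower st st' = (case st of (Q, L) \<Rightarrow>
     \<exists>I d. (I, d) \<in> Q \<and> (\<forall>(J, e) \<in> Q. e \<le> d) \<and>
       (let v = node_val P Gp L I d in
        if (if lower then v > L (OrN I d) else v < L (OrN I d))
        then st' = ((Q - {(I, d)}) \<union> or_parents P Gp I d, L(OrN I d := v))
        else st' = (Q - {(I, d)}, L)))"

definition maptree_iter :: "inst \<Rightarrow> state \<Rightarrow> state \<Rightarrow> bool" where
  "maptree_iter P s s' = (case s of (Gp, E, LB, UB) \<Rightarrow>
     LB (root P) < UB (root P) \<and>
     (\<exists>I d. (descend P s)\<^sup>*\<^sup>* ({1..nN P}, 0) (I, d) \<and> OrN I d \<notin> E \<and>
        (case expand P I d s of (Gp2, E2, LB2, UB2) \<Rightarrow>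
          \<exists>LB3 UB4.
            (prop_step P Gp2 True)\<^sup>*\<^sup>* ({(I, d)}, LB2) ({}, LB3) \<and>
            (prop_step P Gp2 False)\<^sup>*\<^sup>* ({(I, d)}, UB2) ({}, UB4) \<and>
            s' = (Gp2, E2, LB3, UB4))))"

definition maptree_done :: "inst \<Rightarrow> state \<Rightarrow> bool" where
  "maptree_done P s = (case s of (Gp, E, LB, UB) \<Rightarrow> \<not> LB (root P) < UB (root P))"

text \<open>getSolution: all possible outputs (ties in the argmin resolved arbitrarily).\<close>
inductive get_solution :: "inst \<Rightarrow> state \<Rightarrow> nat set \<Rightarrow> nat \<Rightarrow> gnode set \<Rightarrow> bool"
  for P s where
  leaf: "s = (Gp, E, LB, UB) \<Longrightarrow>
     achp P Gp I d = {} \<or> cost_term P I d \<le> min_and P Gp UB I d \<Longrightarrow>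
     get_solution P s I d {OrN I d, TermN I d}"
| split: "s = (Gp, E, LB, UB) \<Longrightarrow> achp P Gp I d \<noteq> {} \<Longrightarrow>
     \<not> cost_term P I d \<le> min_and P Gp UB I d \<Longrightarrow>
     f \<in> achp P Gp I d \<Longrightarrow> cost_and P I d + and_val P UB I d f = min_and P Gp UB I d \<Longrightarrow>
     get_solution P s (restr P I f False) (Suc d) S0 \<Longrightarrow>
     get_solution P s (restr P I f True) (Suc d) S1 \<Longrightarrow>
     get_solution P s I d ({OrN I d, AndN I d f} \<union> S0 \<union> S1)"

end

theory Submission
  imports Defs
begin

text \<open>
  The cost of a tree, the sum of the edge costs of its solution graph, is
  \<open>-log (P(Y | X, T) P(T | X))\<close> when all its nodes are reached by samples, so MAP trees
  are the trees of minimal cost. Throughout MAPTree, \<open>LB[o]\<close> bounds the cost of every tree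
  rooted at \<open>o\<close> from below: initially because the heuristic is admissible (a split costs at
  least \<open>p_split\<close>, and its leaves at best separate the labels perfectly), later because at an
  expanded node the minimum ranges over all possible splits. \<open>UB\<close> only ever drops to its
  own one-step Bellman value and expansion only adds AND children, so \<open>UB\<close> always dominates
  its Bellman value, which is what getSolution needs to return a tree of cost at most
  \<open>UB[r]\<close>. On termination \<open>UB[r] \<le> LB[r]\<close>.
\<close>

lemma Beta_real_pos: "x > 0 \<Longrightarrow> y > 0 \<Longrightarrow> Beta x y > (0::real)"
  by (simp add: Beta_def)

lemma prod_lessThan_mult_le_add:
  fixes f :: "nat \<Rightarrow> real"
  assumes "mono f" and "\<And>i. 0 \<le> f i"
  shows "(\<Prod>i<m. f i) * (\<Prod>i<n. f i) \<le> (\<Prod>i<m + n. f i)"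
proof (induction n)
  case (Suc n)
  have "(\<Prod>i<m. f i) * (\<Prod>i<Suc n. f i) = ((\<Prod>i<m. f i) * (\<Prod>i<n. f i)) * f n"
    by (simp add: ac_simps)
  also have "\<dots> \<le> (\<Prod>i<m + n. f i) * f (m + n)"
    using Suc assms by (intro mult_mono monoD[OF assms(1)]) (auto intro: prod_nonneg)
  finally show ?case by simp
qed simp

lemma mono_shifted_ratio:
  fixes p q :: real
  assumes "p > 0" and "q > 0"
  shows "mono (\<lambda>i::nat. (i + p) / (i + p + q))"
proof (rule monoI)
  fix i j :: nat assume "i \<le> j"
  then show "(i + p) / (i + p + q) \<le> (j + p) / (j + p + q)"
    using assms by (simp add: divide_simps) (simp add: algebra_simps mult_right_mono)
qed

lemma nodes_ok_nonempty: "nodes_ok P I T \<Longrightarrow> I \<noteq> {}"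
  by (cases T) auto

lemma nodes_ok_Node_valid_feat: "nodes_ok P I (Node f t0 t1) \<Longrightarrow> f \<in> valid_feats P I"
  by (auto simp: valid_feats_def dest: nodes_ok_nonempty)

fun tree_cost :: "inst \<Rightarrow> nat set \<Rightarrow> nat \<Rightarrow> dtree \<Rightarrow> ereal" where
  "tree_cost P I d Leaf = cost_term P I d"
| "tree_cost P I d (Node f t0 t1) = cost_and P I d
      + tree_cost P (restr P I f False) (Suc d) t0 + tree_cost P (restr P I f True) (Suc d) t1"

lemma cnt_restr_split:
  "finite I \<Longrightarrow> cnt P k I = cnt P k (restr P I f False) + cnt P k (restr P I f True)"
proof -
  assume "finite I"
  moreover have "{i \<in> I. yy P i = k}
      = {i \<in> restr P I f False. yy P i = k} \<union> {i \<in> restr P I f True. yy P i = k}"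
    by (auto simp: restr_def)
  ultimately show ?thesis
    unfolding cnt_def by (subst card_Un_disjoint[symmetric]) (auto simp: restr_def)
qed

locale pos_pseudocounts =
  fixes P :: inst
  assumes rho1_pos: "rho1 P > 0" and rho0_pos: "rho0 P > 0"
begin

lemma leaf_lik_pos: "leaf_lik P a b > 0"
  unfolding leaf_lik_def using rho1_pos rho0_pos by (intro divide_pos_pos Beta_real_pos) auto

lemma leaf_lik_0_0: "leaf_lik P 0 0 = 1"
  using Beta_real_pos[OF rho1_pos rho0_pos] by (simp add: leaf_lik_def)

lemma leaf_lik_Suc_left:
  "leaf_lik P (Suc a) b = leaf_lik P a b * ((a + rho1 P) / (real a + real b + rho1 P + rho0 P))"
proof -
  have "a + rho1 P \<notin> \<int>\<^sub>\<le>\<^sub>0" using rho1_pos by (auto elim!: nonpos_Ints_cases)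
  from Beta_plus1_left[OF this, of "b + rho0 P"] rho1_pos rho0_pos
  have "Beta (real (Suc a) + rho1 P) (b + rho0 P)
      = Beta (a + rho1 P) (b + rho0 P) * ((a + rho1 P) / (real a + real b + rho1 P + rho0 P))"
    by (simp add: field_simps)
  then show ?thesis unfolding leaf_lik_def by simp
qed

lemma leaf_lik_Suc_right:
  "leaf_lik P a (Suc b) = leaf_lik P a b * ((b + rho0 P) / (real a + real b + rho1 P + rho0 P))"
proof -
  have "b + rho0 P \<notin> \<int>\<^sub>\<le>\<^sub>0" using rho0_pos by (auto elim!: nonpos_Ints_cases)
  from Beta_plus1_right[OF this, of "a + rho1 P"] rho1_pos rho0_pos
  have "Beta (a + rho1 P) (real (Suc b) + rho0 P)
      = Beta (a + rho1 P) (b + rho0 P) * ((b + rho0 P) / (real a + real b + rho1 P + rho0 P))"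
    by (simp add: field_simps)
  then show ?thesis unfolding leaf_lik_def by simp
qed

lemma leaf_lik_pure_ones: "leaf_lik P a 0 = (\<Prod>i<a. (real i + rho1 P) / (real i + rho1 P + rho0 P))"
  by (induction a) (simp_all add: leaf_lik_0_0 leaf_lik_Suc_left)

lemma leaf_lik_pure_zeros: "leaf_lik P 0 b = (\<Prod>i<b. (real i + rho0 P) / (real i + rho1 P + rho0 P))"
  by (induction b) (simp_all add: leaf_lik_0_0 leaf_lik_Suc_right add.commute add.left_commute)

lemma leaf_lik_pure_ones_mult_le: "leaf_lik P a1 0 * leaf_lik P a2 0 \<le> leaf_lik P (a1 + a2) 0"
  unfolding leaf_lik_pure_ones using rho1_pos rho0_pos
  by (intro prod_lessThan_mult_le_add mono_shifted_ratio) auto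

lemma leaf_lik_pure_zeros_mult_le: "leaf_lik P 0 b1 * leaf_lik P 0 b2 \<le> leaf_lik P 0 (b1 + b2)"
proof -
  have "mono (\<lambda>i::nat. (i + rho0 P) / (i + rho1 P + rho0 P))"
    using mono_shifted_ratio[OF rho0_pos rho1_pos] by (simp add: add_ac)
  then show ?thesis
    unfolding leaf_lik_pure_zeros using rho1_pos rho0_pos
    by (intro prod_lessThan_mult_le_add) auto
qed

lemma leaf_lik_le_pure_mult: "leaf_lik P a b \<le> leaf_lik P a 0 * leaf_lik P 0 b"
proof (induction b)
  case (Suc b)
  let ?r = "\<lambda>a. (b + rho0 P) / (real a + real b + rho1 P + rho0 P)"
  have "?r a \<le> ?r 0"
    using rho0_pos rho1_pos by (intro divide_left_mono) auto
  have "leaf_lik P a (Suc b) = leaf_lik P a b * ?r a"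
    by (rule leaf_lik_Suc_right)
  also have "\<dots> \<le> (leaf_lik P a 0 * leaf_lik P 0 b) * ?r 0"
    using Suc \<open>?r a \<le> ?r 0\<close> leaf_lik_pos rho0_pos rho1_pos
    by (intro mult_mono) (auto intro: less_imp_le)
  also have "\<dots> = leaf_lik P a 0 * leaf_lik P 0 (Suc b)"
    using leaf_lik_Suc_right[of 0 b] by simp
  finally show ?case .
qed (simp add: leaf_lik_0_0)

end

locale pos_hyperparams = pos_pseudocounts +
  assumes alpha_pos: "0 < alpha P" and alpha_less_1: "alpha P < 1" and beta_nonneg: "beta P \<ge> 0"
begin

lemma p_split_pos: "p_split P d > 0"
  unfolding p_split_def using alpha_pos by simp

lemma p_split_less_1: "p_split P d < 1"
proof -
  have "(1 + real d) powr (- beta P) \<le> 1"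
    using beta_nonneg powr_mono2'[of "- beta P" 1 "1 + real d"] by simp
  then have "p_split P d \<le> alpha P"
    unfolding p_split_def using alpha_pos by (simp add: mult_left_le)
  then show ?thesis using alpha_less_1 by simp
qed

lemma p_leaf_pos: "p_leaf P d I > 0"
  unfolding p_leaf_def using p_split_less_1 by simp

lemma p_leaf_le_1: "p_leaf P d I \<le> 1"
  unfolding p_leaf_def using p_split_pos[of d] by simp

lemma p_inner_nonneg: "p_inner P d I \<ge> 0"
  unfolding p_inner_def using p_split_pos[of d] by simp

lemma p_inner_le_p_split: "p_inner P d I \<le> p_split P d"
proof (cases "valid_feats P I = {}")
  case False
  then have "card (valid_feats P I) \<ge> 1"
    by (simp add: Suc_le_eq card_gt_0_iff valid_feats_def)
  then show ?thesis using False p_split_pos[of d] by (simp add: p_inner_def divide_le_eq)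
qed (simp add: p_inner_def p_split_pos less_imp_le)

lemma p_inner_pos: "f \<in> valid_feats P I \<Longrightarrow> p_inner P d I > 0"
  using p_split_pos[of d] by (auto simp: p_inner_def card_gt_0_iff valid_feats_def)

lemma prior_nonneg: "prior P I d T \<ge> 0"
  by (induction T arbitrary: I d) (simp_all add: p_leaf_pos less_imp_le p_inner_nonneg)

lemma prior_le_1: "prior P I d T \<le> 1"
proof (induction T arbitrary: I d)
  case (Node f t0 t1)
  have "p_inner P d I \<le> 1" using p_inner_le_p_split[of d I] p_split_less_1[of d] by simp
  with Node.IH show ?case
    by (simp add: mult_le_one p_inner_nonneg prior_nonneg mult_nonneg_nonneg)
qed (simp add: p_leaf_le_1)

lemma prior_Node_le_p_split: "prior P I d (Node f t0 t1) \<le> p_split P d"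
proof -
  have "prior P I d (Node f t0 t1) = p_inner P d I
      * (prior P (restr P I f False) (Suc d) t0 * prior P (restr P I f True) (Suc d) t1)"
    by (simp add: mult.assoc)
  also have "\<dots> \<le> p_split P d * 1"
    using p_inner_le_p_split p_inner_nonneg prior_nonneg prior_le_1 p_split_pos[of d]
    by (intro mult_mono mult_le_one) auto
  finally show ?thesis by simp
qed

lemma prior_pos: "nodes_ok P I T \<Longrightarrow> prior P I d T > 0"
proof (induction T arbitrary: I d)
  case (Node f t0 t1)
  then show ?case using p_inner_pos[OF nodes_ok_Node_valid_feat[OF Node.prems]] by simp
qed (simp add: p_leaf_pos)

lemma lik_pos: "lik P I T > 0"
  by (induction T arbitrary: I) (simp_all add: leaf_lik_pos)

lemma tree_cost_eq_neg_ln: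
  "nodes_ok P I T \<Longrightarrow> tree_cost P I d T = ereal (- ln (lik P I T * prior P I d T))"
proof (induction T arbitrary: I d)
  case Leaf
  then show ?case
    using p_leaf_pos[of d I] leaf_lik_pos[of "cnt P True I" "cnt P False I"]
    by (simp add: cost_term_def mlog_def ln_mult not_le)
next
  case (Node f t0 t1)
  let ?I0 = "restr P I f False" and ?I1 = "restr P I f True"
  have subtrees: "nodes_ok P ?I0 t0" "nodes_ok P ?I1 t1" using Node.prems by auto
  have "p_inner P d I > 0" using p_inner_pos nodes_ok_Node_valid_feat Node.prems by blast
  moreover have "lik P ?I0 t0 > 0" "lik P ?I1 t1 > 0"
    "prior P ?I0 (Suc d) t0 > 0" "prior P ?I1 (Suc d) t1 > 0"
    using lik_pos prior_pos subtrees by auto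
  ultimately show ?case
    using Node.IH(1)[OF subtrees(1)] Node.IH(2)[OF subtrees(2)]
    by (simp add: cost_and_def mlog_def ln_mult not_le)
qed

lemma unnorm_post_le_iff_tree_cost_ge:
  assumes "nodes_ok P {1..nN P} T" and "nodes_ok P {1..nN P} T'"
  shows "unnorm_post P T' \<le> unnorm_post P T
    \<longleftrightarrow> tree_cost P {1..nN P} 0 T \<le> tree_cost P {1..nN P} 0 T'"
  using assms lik_pos prior_pos
  by (simp add: tree_cost_eq_neg_ln unnorm_post_def)

lemma lik_le_pure_leaves:
  "finite I \<Longrightarrow> lik P I T \<le> leaf_lik P (cnt P True I) 0 * leaf_lik P 0 (cnt P False I)"
proof (induction T arbitrary: I)
  case Leaf
  then show ?case using leaf_lik_le_pure_mult by simp
next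
  case (Node f t0 t1)
  let ?I0 = "restr P I f False" and ?I1 = "restr P I f True"
  let ?a0 = "cnt P True ?I0" and ?a1 = "cnt P True ?I1"
    and ?b0 = "cnt P False ?I0" and ?b1 = "cnt P False ?I1"
  have "finite ?I0" "finite ?I1" using Node.prems by (auto simp: restr_def)
  then have "lik P I (Node f t0 t1)
      \<le> (leaf_lik P ?a0 0 * leaf_lik P 0 ?b0) * (leaf_lik P ?a1 0 * leaf_lik P 0 ?b1)"
    using Node.IH[of ?I0] Node.IH[of ?I1] lik_pos[of ?I1 t1]
      leaf_lik_pos[of ?a0 0] leaf_lik_pos[of 0 ?b0]
    by (simp add: mult_mono less_imp_le)
  also have "\<dots> = (leaf_lik P ?a0 0 * leaf_lik P ?a1 0) * (leaf_lik P 0 ?b0 * leaf_lik P 0 ?b1)"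
    by (simp add: ac_simps)
  also have "\<dots> \<le> leaf_lik P (?a0 + ?a1) 0 * leaf_lik P 0 (?b0 + ?b1)"
    using leaf_lik_pure_ones_mult_le leaf_lik_pure_zeros_mult_le leaf_lik_pos
    by (intro mult_mono) (auto intro: less_imp_le)
  also have "\<dots> = leaf_lik P (cnt P True I) 0 * leaf_lik P 0 (cnt P False I)"
    using cnt_restr_split[OF Node.prems] by metis
  finally show ?case .
qed

lemma heur_le_tree_cost:
  assumes "finite I" and "nodes_ok P I T"
  shows "heur P I d \<le> tree_cost P I d T"
proof -
  let ?c1 = "cnt P True I" and ?c0 = "cnt P False I"
  have pos: "lik P I T * prior P I d T > 0" using lik_pos prior_pos[OF assms(2)] by simp
  have "ln (lik P I T * prior P I d T) \<le> max (ln (leaf_lik P ?c1 ?c0))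
       (ln (p_split P d) + ln (leaf_lik P ?c1 0) + ln (leaf_lik P 0 ?c0))"
  proof (cases T)
    case Leaf
    then have "lik P I T * prior P I d T \<le> leaf_lik P ?c1 ?c0"
      using p_leaf_le_1[of d I] leaf_lik_pos[of ?c1 ?c0] by (simp add: mult_left_le)
    with pos have "ln (lik P I T * prior P I d T) \<le> ln (leaf_lik P ?c1 ?c0)" by simp
    then show ?thesis by simp
  next
    case (Node f t0 t1)
    have "prior P I d T \<le> p_split P d" using Node prior_Node_le_p_split by simp
    then have "lik P I T * prior P I d T \<le> (leaf_lik P ?c1 0 * leaf_lik P 0 ?c0) * p_split P d"
      using lik_le_pure_leaves[OF assms(1), of T] lik_pos[of I T] prior_nonneg[of I d T]
        leaf_lik_pos[of ?c1 0] leaf_lik_pos[of 0 ?c0]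
      by (intro mult_mono) simp_all
    with pos have "ln (lik P I T * prior P I d T)
        \<le> ln ((leaf_lik P ?c1 0 * leaf_lik P 0 ?c0) * p_split P d)"
      by simp
    also have "\<dots> = ln (p_split P d) + ln (leaf_lik P ?c1 0) + ln (leaf_lik P 0 ?c0)"
      using leaf_lik_pos[of ?c1 0] leaf_lik_pos[of 0 ?c0] p_split_pos[of d] by (simp add: ln_mult)
    finally show ?thesis by simp
  qed
  then show ?thesis unfolding heur_def tree_cost_eq_neg_ln[OF assms(2)] by simp
qed

end

lemma valid_feats_restr_subset: "valid_feats P (restr P I f k) \<subseteq> valid_feats P I - {f}"
  by (auto simp: valid_feats_def restr_def)

text \<open>Each split consumes a valid feature, so \<open>depth_fits\<close> holds at every node of the graph;
  consequently the depth cap \<open>d < F\<close> on AND children never removes a split.\<close>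

definition depth_fits :: "inst \<Rightarrow> nat set \<Rightarrow> nat \<Rightarrow> bool" where
  "depth_fits P I d \<longleftrightarrow> d + card (valid_feats P I) \<le> nF P"

lemma finite_valid_feats: "finite (valid_feats P I)"
  by (simp add: valid_feats_def)

lemma depth_fits_restr:
  assumes "depth_fits P I d" and "f \<in> valid_feats P I"
  shows "depth_fits P (restr P I f k) (Suc d)"
proof -
  have "card (valid_feats P (restr P I f k)) \<le> card (valid_feats P I - {f})"
    by (intro card_mono valid_feats_restr_subset) (simp add: finite_valid_feats)
  also have "\<dots> < card (valid_feats P I)"
    using finite_valid_feats assms(2) by (rule card_Diff1_less)
  finally show ?thesis using assms(1) by (simp add: depth_fits_def)
qed

lemma ach_eq_valid_feats: "depth_fits P I d \<Longrightarrow> ach P I d = valid_feats P I"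
  using finite_valid_feats[of P I] card_gt_0_iff[of "valid_feats P I"]
  by (auto simp: ach_def depth_fits_def)

definition wf_graph :: "inst \<Rightarrow> gnode set \<Rightarrow> gnode set \<Rightarrow> bool" where
  "wf_graph P Gp E \<longleftrightarrow> root P \<in> Gp
     \<and> (\<forall>I d. OrN I d \<in> Gp \<longrightarrow> finite I \<and> depth_fits P I d)
     \<and> (\<forall>I d f. AndN I d f \<in> Gp \<longrightarrow> OrN I d \<in> E \<and> (\<forall>k. OrN (restr P I f k) (Suc d) \<in> Gp))
     \<and> (\<forall>I d. OrN I d \<in> E \<longrightarrow> OrN I d \<in> Gp \<and> (\<forall>f \<in> ach P I d. AndN I d f \<in> Gp))"

lemma wf_graphD:
  assumes "wf_graph P Gp E"
  shows "root P \<in> Gp"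
    and "OrN I d \<in> Gp \<Longrightarrow> finite I" and "OrN I d \<in> Gp \<Longrightarrow> depth_fits P I d"
    and "AndN I d f \<in> Gp \<Longrightarrow> OrN I d \<in> E"
    and "AndN I d f \<in> Gp \<Longrightarrow> OrN (restr P I f k) (Suc d) \<in> Gp"
    and "OrN I d \<in> E \<Longrightarrow> OrN I d \<in> Gp"
    and "OrN I d \<in> E \<Longrightarrow> f \<in> ach P I d \<Longrightarrow> AndN I d f \<in> Gp"
  using assms unfolding wf_graph_def by blast+

definition lower_bound :: "inst \<Rightarrow> gnode set \<Rightarrow> (gnode \<Rightarrow> ereal) \<Rightarrow> bool" where
  "lower_bound P Gp L \<longleftrightarrow>
     (\<forall>I d T. OrN I d \<in> Gp \<longrightarrow> nodes_ok P I T \<longrightarrow> L (OrN I d) \<le> tree_cost P I d T)"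

definition bellman_upper :: "inst \<Rightarrow> gnode set \<Rightarrow> (gnode \<Rightarrow> ereal) \<Rightarrow> bool" where
  "bellman_upper P Gp U \<longleftrightarrow> (\<forall>I d. node_val P Gp U I d \<le> U (OrN I d))"

definition maptree_inv :: "inst \<Rightarrow> state \<Rightarrow> bool" where
  "maptree_inv P s \<longleftrightarrow> (case s of (Gp, E, LB, UB) \<Rightarrow>
     wf_graph P Gp E \<and> lower_bound P Gp LB \<and> bellman_upper P Gp UB)"

lemma node_val_le_tree_cost:
  assumes wf: "wf_graph P Gp E" and lb: "lower_bound P Gp L"
    and expanded: "OrN I d \<in> E" and T: "nodes_ok P I T"
  shows "node_val P Gp L I d \<le> tree_cost P I d T"
proof (cases T)
  case Leaf
  then show ?thesis by (simp add: node_val_def)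
next
  case (Node f t0 t1)
  have "depth_fits P I d" using wf_graphD(3)[OF wf wf_graphD(6)[OF wf expanded]] .
  then have "f \<in> ach P I d"
    using T Node nodes_ok_Node_valid_feat by (simp add: ach_eq_valid_feats)
  then have and_node: "AndN I d f \<in> Gp" using wf_graphD(7)[OF wf expanded] by blast
  have "min_and P Gp L I d \<le> cost_and P I d + and_val P L I d f"
    unfolding min_and_def using \<open>f \<in> ach P I d\<close> and_node by (intro INF_lower) (simp add: achp_def)
  also have "\<dots> \<le> cost_and P I d
      + (tree_cost P (restr P I f False) (Suc d) t0 + tree_cost P (restr P I f True) (Suc d) t1)"
    unfolding and_val_def using lb wf_graphD(5)[OF wf and_node] T Node
    by (intro add_mono order.refl) (auto simp: lower_bound_def)
  also have "\<dots> = tree_cost P I d T" using Node by (simp add: add.assoc)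
  finally show ?thesis by (simp add: node_val_def min.coboundedI1)
qed

lemma prop_stepE:
  assumes "prop_step P Gp lower (Q, L) st'"
  obtains I d where "(I, d) \<in> Q"
    and "(if lower then node_val P Gp L I d > L (OrN I d) else node_val P Gp L I d < L (OrN I d))
      \<Longrightarrow> st' = ((Q - {(I, d)}) \<union> or_parents P Gp I d, L(OrN I d := node_val P Gp L I d))"
    and "\<not> (if lower then node_val P Gp L I d > L (OrN I d) else node_val P Gp L I d < L (OrN I d))
      \<Longrightarrow> st' = (Q - {(I, d)}, L)"
proof -
  from assms obtain I d where "(I, d) \<in> Q" and
    "let v = node_val P Gp L I d in
       if (if lower then v > L (OrN I d) else v < L (OrN I d))
       then st' = ((Q - {(I, d)}) \<union> or_parents P Gp I d, L(OrN I d := v))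
       else st' = (Q - {(I, d)}, L)"
    unfolding prop_step_def prod.case by blast
  then show ?thesis using that unfolding Let_def by presburger
qed

lemma or_parents_expanded: "wf_graph P Gp E \<Longrightarrow> case_prod OrN ` or_parents P Gp I d \<subseteq> E"
  by (auto simp: or_parents_def dest: wf_graphD(4))

lemma lower_bound_fun_upd:
  "lower_bound P Gp L \<Longrightarrow> (\<And>T. nodes_ok P I T \<Longrightarrow> v \<le> tree_cost P I d T)
    \<Longrightarrow> lower_bound P Gp (L(OrN I d := v))"
  by (simp add: lower_bound_def)

text \<open>Only expanded nodes are ever queued: at an unexpanded node \<open>node_val\<close> sees no split
  and is no lower bound.\<close>

lemma prop_step_lower_bound:
  assumes step: "prop_step P Gp True (Q, L) (Q', L')" and wf: "wf_graph P Gp E"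
    and "case_prod OrN ` Q \<subseteq> E" and "lower_bound P Gp L"
  shows "case_prod OrN ` Q' \<subseteq> E \<and> lower_bound P Gp L'"
proof -
  obtain I d where "(I, d) \<in> Q"
    and raise: "node_val P Gp L I d > L (OrN I d)
      \<Longrightarrow> (Q', L') = ((Q - {(I, d)}) \<union> or_parents P Gp I d, L(OrN I d := node_val P Gp L I d))"
    and keep: "\<not> node_val P Gp L I d > L (OrN I d) \<Longrightarrow> (Q', L') = (Q - {(I, d)}, L)"
    using step by (rule prop_stepE) auto
  then have "OrN I d \<in> E" using assms(3) by auto
  then have "lower_bound P Gp (L(OrN I d := node_val P Gp L I d))"
    using lower_bound_fun_upd[OF assms(4)] node_val_le_tree_cost[OF wf assms(4)] by blast
  moreover have "case_prod OrN ` (Q - {(I, d)} \<union> or_parents P Gp I d) \<subseteq> E"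
    using assms(3) or_parents_expanded[OF wf, of I d] by blast
  moreover have "case_prod OrN ` (Q - {(I, d)}) \<subseteq> E" using assms(3) by blast
  ultimately show ?thesis
    using raise keep assms(4) by (cases "node_val P Gp L I d > L (OrN I d)") simp_all
qed

lemma prop_steps_lower_bound:
  assumes "(prop_step P Gp True)\<^sup>*\<^sup>* (Q, L) (Q', L')" and "wf_graph P Gp E"
    and "case_prod OrN ` Q \<subseteq> E" and "lower_bound P Gp L"
  shows "lower_bound P Gp L'"
proof -
  from assms(1) have "case_prod OrN ` Q' \<subseteq> E \<and> lower_bound P Gp L'"
  proof (induction rule: rtranclp_induct2)
    case (step Q1 L1 Q2 L2)
    then show ?case using prop_step_lower_bound[OF step(2) assms(2)] by blast
  qed (use assms(3,4) in blast)
  then show ?thesis ..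
qed

lemma node_val_antimono:
  assumes "\<And>J e. U' (OrN J e) \<le> U (OrN J e)" and "Gp \<subseteq> Gp'"
  shows "node_val P Gp' U' I d \<le> node_val P Gp U I d"
proof -
  have "min_and P Gp' U' I d \<le> min_and P Gp U I d"
    unfolding min_and_def
  proof (rule INF_mono)
    fix f assume "f \<in> achp P Gp I d"
    then have "f \<in> achp P Gp' I d" using assms(2) by (auto simp: achp_def)
    moreover have "cost_and P I d + and_val P U' I d f \<le> cost_and P I d + and_val P U I d f"
      unfolding and_val_def by (intro add_mono order.refl assms(1))
    ultimately show "\<exists>g \<in> achp P Gp' I d.
        cost_and P I d + and_val P U' I d g \<le> cost_and P I d + and_val P U I d f"
      by blast
  qed
  then show ?thesis unfolding node_val_def by (rule min.mono) simp
qed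

lemma node_val_fun_upd_self: "node_val P Gp (U(OrN I d := v)) I d = node_val P Gp U I d"
  by (simp add: node_val_def min_and_def and_val_def)

lemma bellman_upper_mono_graph: "bellman_upper P Gp U \<Longrightarrow> Gp \<subseteq> Gp' \<Longrightarrow> bellman_upper P Gp' U"
  unfolding bellman_upper_def using node_val_antimono[of U U Gp Gp' P]
  by (meson order.refl order.trans)

lemma bellman_upper_decrease:
  assumes "bellman_upper P Gp U" and "v = node_val P Gp U I d" and "v < U (OrN I d)"
  shows "bellman_upper P Gp (U(OrN I d := v))"
  unfolding bellman_upper_def
proof (intro allI)
  fix J e
  have "node_val P Gp (U(OrN I d := v)) J e \<le> node_val P Gp U J e"
    using assms(3) by (intro node_val_antimono) auto
  also have "\<dots> \<le> U (OrN J e)" using assms(1) by (simp add: bellman_upper_def)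
  finally show "node_val P Gp (U(OrN I d := v)) J e \<le> (U(OrN I d := v)) (OrN J e)"
    using assms(2) by (auto simp: node_val_fun_upd_self)
qed

lemma prop_steps_bellman_upper:
  assumes "(prop_step P Gp False)\<^sup>*\<^sup>* (Q, U) (Q', U')" and "bellman_upper P Gp U"
  shows "bellman_upper P Gp U'"
  using assms
proof (induction rule: rtranclp_induct2)
  case (step Q1 U1 Q2 U2)
  obtain I d where
    lower: "node_val P Gp U1 I d < U1 (OrN I d)
      \<Longrightarrow> (Q2, U2) = ((Q1 - {(I, d)}) \<union> or_parents P Gp I d, U1(OrN I d := node_val P Gp U1 I d))"
    and keep: "\<not> node_val P Gp U1 I d < U1 (OrN I d) \<Longrightarrow> (Q2, U2) = (Q1 - {(I, d)}, U1)"
    using step.hyps(2) by (rule prop_stepE) auto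
  have "bellman_upper P Gp U1" using step.IH step.prems .
  then show ?case
    using lower keep bellman_upper_decrease[OF _ refl, of P Gp U1 I d] by (metis prod.inject)
qed

lemma descend_target_in_graph:
  assumes "descend P (Gp, E, LB, UB) (I, d) (J, e)" and wf: "wf_graph P Gp E"
  shows "OrN J e \<in> Gp"
proof -
  from assms(1) obtain f k where "f \<in> achp P Gp I d" and "(J, e) = (restr P I f k, Suc d)"
    unfolding descend_def by (auto simp: Let_def split: if_splits)
  then show ?thesis using wf_graphD(5)[OF wf] by (auto simp: achp_def)
qed

lemma descend_reachable_in_graph:
  assumes "(descend P (Gp, E, LB, UB))\<^sup>*\<^sup>* ({1..nN P}, 0) (I, d)" and wf: "wf_graph P Gp E"
  shows "OrN I d \<in> Gp"
  using assms(1)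
proof (induction rule: rtranclp_induct2)
  case refl
  show ?case using wf_graphD(1)[OF wf] by (simp add: root_def)
next
  case (step I d J e)
  then show ?case using descend_target_in_graph wf by blast
qed

lemma expand_components:
  assumes "expand P I d (Gp, E, LB, UB) = (Gp', E', LB', UB')"
  defines "kids \<equiv> {OrN (restr P I f k) (Suc d) | f k. f \<in> ach P I d}"
  shows "Gp' = Gp \<union> {TermN I d} \<union> AndN I d ` ach P I d \<union> kids"
    and "E' = insert (OrN I d) E" and "UB' = UB"
    and "LB' (OrN J e) = (if OrN J e \<in> kids then heur P J e else LB (OrN J e))"
  using assms(1) unfolding kids_def expand_def Let_def by (auto; blast)+

lemma wf_graph_expand:
  assumes wf: "wf_graph P Gp E" and node: "OrN I d \<in> Gp"
    and exp: "expand P I d (Gp, E, LB, UB) = (Gp', E', LB', UB')"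
  shows "wf_graph P Gp' E'"
proof -
  note Gp' = expand_components(1)[OF exp] and E' = expand_components(2)[OF exp]
  have kid: "finite (restr P I f k) \<and> depth_fits P (restr P I f k) (Suc d)"
    if "f \<in> ach P I d" for f k
    using that wf_graphD(2,3)[OF wf node] depth_fits_restr ach_eq_valid_feats
    by (auto simp: restr_def)
  show ?thesis
    unfolding wf_graph_def
  proof (intro conjI allI impI ballI)
    show "root P \<in> Gp'" using wf_graphD(1)[OF wf] Gp' by blast
  next
    fix J e assume "OrN J e \<in> Gp'"
    then show "finite J" "depth_fits P J e"
      using kid wf_graphD(2,3)[OF wf] Gp' by auto
  next
    fix J e g assume "AndN J e g \<in> Gp'"
    then show "OrN J e \<in> E'" "\<And>k. OrN (restr P J g k) (Suc e) \<in> Gp'"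
      using wf_graphD(4,5)[OF wf] Gp' E' by auto
  next
    fix J e assume "OrN J e \<in> E'"
    then show "OrN J e \<in> Gp'" "\<And>g. g \<in> ach P J e \<Longrightarrow> AndN J e g \<in> Gp'"
      using node wf_graphD(6,7)[OF wf] Gp' E' by auto
  qed
qed

context pos_hyperparams
begin

lemma lower_bound_expand:
  assumes wf: "wf_graph P Gp E" and node: "OrN I d \<in> Gp" and lb: "lower_bound P Gp LB"
    and exp: "expand P I d (Gp, E, LB, UB) = (Gp', E', LB', UB')"
  shows "lower_bound P Gp' LB'"
  unfolding lower_bound_def
proof (intro allI impI)
  fix J e T assume J: "OrN J e \<in> Gp'" and T: "nodes_ok P J T"
  have "finite J" using wf_graph_expand[OF wf node exp] J by (rule wf_graphD(2))
  then show "LB' (OrN J e) \<le> tree_cost P J e T"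
    using lb J T heur_le_tree_cost expand_components(1,4)[OF exp] by (auto simp: lower_bound_def)
qed

lemma maptree_iter_preserves_inv:
  assumes iter: "maptree_iter P s s'" and inv: "maptree_inv P s"
  shows "maptree_inv P s'"
proof -
  obtain Gp E LB UB where s: "s = (Gp, E, LB, UB)" by (cases s)
  have wf: "wf_graph P Gp E" and lb: "lower_bound P Gp LB" and ub: "bellman_upper P Gp UB"
    using inv s by (auto simp: maptree_inv_def)
  from iter obtain I d where reach: "(descend P s)\<^sup>*\<^sup>* ({1..nN P}, 0) (I, d)" and
    rest: "case expand P I d s of (Gp', E', LB', UB') \<Rightarrow> \<exists>LB'' UB''.
      (prop_step P Gp' True)\<^sup>*\<^sup>* ({(I, d)}, LB') ({}, LB'') \<and>
      (prop_step P Gp' False)\<^sup>*\<^sup>* ({(I, d)}, UB') ({}, UB'') \<and> s' = (Gp', E', LB'', UB'')"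
    unfolding maptree_iter_def s by auto
  obtain Gp' E' LB' UB' where exp: "expand P I d (Gp, E, LB, UB) = (Gp', E', LB', UB')"
    by (metis prod_cases4)
  then obtain LB'' UB'' where
    lower: "(prop_step P Gp' True)\<^sup>*\<^sup>* ({(I, d)}, LB') ({}, LB'')" and
    upper: "(prop_step P Gp' False)\<^sup>*\<^sup>* ({(I, d)}, UB') ({}, UB'')" and
    s': "s' = (Gp', E', LB'', UB'')"
    using rest unfolding s exp by blast
  have node: "OrN I d \<in> Gp" using descend_reachable_in_graph[OF reach[unfolded s] wf] .
  have wf': "wf_graph P Gp' E'" using wf_graph_expand[OF wf node exp] .
  have "lower_bound P Gp' LB''"
    using prop_steps_lower_bound[OF lower wf' _ lower_bound_expand[OF wf node lb exp]]
      expand_components(2)[OF exp] by simp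
  moreover have "Gp \<subseteq> Gp'" and "UB' = UB" using expand_components(1,3)[OF exp] by auto
  then have "bellman_upper P Gp' UB''"
    using prop_steps_bellman_upper[OF upper] bellman_upper_mono_graph[OF ub] by simp
  ultimately show ?thesis using wf' s' by (simp add: maptree_inv_def)
qed

lemma maptree_inv_init: "maptree_inv P (init_state P)"
proof -
  have "valid_feats P {1..nN P} \<subseteq> {1..nF P}" by (auto simp: valid_feats_def)
  then have "card (valid_feats P {1..nN P}) \<le> card {1..nF P}" by (intro card_mono) simp_all
  then have "card (valid_feats P {1..nN P}) \<le> nF P" by simp
  then have "wf_graph P {root P} {}" by (simp add: wf_graph_def root_def depth_fits_def)
  moreover have "lower_bound P {root P} ((\<lambda>_. 0)(root P := heur P {1..nN P} 0))"
    using heur_le_tree_cost by (simp add: lower_bound_def root_def)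
  ultimately show ?thesis by (simp add: maptree_inv_def init_state_def bellman_upper_def)
qed

lemma maptree_reachable_inv: "(maptree_iter P)\<^sup>*\<^sup>* (init_state P) s \<Longrightarrow> maptree_inv P s"
  by (induction rule: rtranclp_induct) (use maptree_inv_init maptree_iter_preserves_inv in blast)+

end

lemma get_solution_tree:
  assumes "get_solution P s I d S" and "s = (Gp, E, LB, UB)" and "bellman_upper P Gp UB"
    and "I \<noteq> {}"
  shows "\<exists>T. nodes_ok P I T \<and> sol_of_tree P I d T = S \<and> tree_cost P I d T \<le> UB (OrN I d)"
  using assms
proof (induction rule: get_solution.induct)
  case (leaf Gp' E' LB' UB' I d)
  then have "cost_term P I d \<le> min_and P Gp UB I d" by (auto simp: min_and_def)
  then have "cost_term P I d = node_val P Gp UB I d" by (simp add: node_val_def min_absorb2)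
  also have "\<dots> \<le> UB (OrN I d)" using leaf.prems(2) by (simp add: bellman_upper_def)
  finally show ?case using leaf.prems(3) by (intro exI[of _ Leaf]) simp
next
  case (split Gp' E' LB' UB' I d f S0 S1)
  let ?I0 = "restr P I f False" and ?I1 = "restr P I f True"
  have "f \<in> valid_feats P I" using split.hyps(4) by (simp add: achp_def ach_def)
  then have nonempty: "?I0 \<noteq> {}" "?I1 \<noteq> {}" and "f \<in> {1..nF P}" by (auto simp: valid_feats_def)
  obtain T0 where T0: "nodes_ok P ?I0 T0" "sol_of_tree P ?I0 (Suc d) T0 = S0"
    "tree_cost P ?I0 (Suc d) T0 \<le> UB (OrN ?I0 (Suc d))"
    using split.IH(1) split.prems nonempty by blast
  obtain T1 where T1: "nodes_ok P ?I1 T1" "sol_of_tree P ?I1 (Suc d) T1 = S1"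
    "tree_cost P ?I1 (Suc d) T1 \<le> UB (OrN ?I1 (Suc d))"
    using split.IH(2) split.prems nonempty by blast
  have "tree_cost P I d (Node f T0 T1) \<le> cost_and P I d + and_val P UB I d f"
    unfolding and_val_def using T0(3) T1(3) by (simp add: add.assoc add_mono)
  also have "\<dots> = node_val P Gp UB I d"
    using split.hyps(1,3,5) split.prems(1) by (auto simp: node_val_def min_def)
  also have "\<dots> \<le> UB (OrN I d)" using split.prems(2) by (simp add: bellman_upper_def)
  finally show ?case
    using T0 T1 nonempty \<open>f \<in> {1..nF P}\<close> split.prems(3) by (intro exI[of _ "Node f T0 T1"]) auto
qed

theorem corollary11:
  fixes P :: inst and s :: state and S :: "gnode set"
  assumes "nN P \<ge> 1"
    and "rho1 P > 0" and "rho0 P > 0"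
    and "0 < alpha P" and "alpha P < 1" and "beta P \<ge> 0"
    and "(maptree_iter P)\<^sup>*\<^sup>* (init_state P) s"
    and "maptree_done P s"
    and "get_solution P s {1..nN P} 0 S"
  shows "\<exists>T. nodes_ok P {1..nN P} T \<and> sol_of_tree P {1..nN P} 0 T = S \<and>
           (\<forall>T'. nodes_ok P {1..nN P} T' \<longrightarrow> unnorm_post P T' \<le> unnorm_post P T)"
proof -
  interpret pos_hyperparams P using assms(2-6) by unfold_locales
  obtain Gp E LB UB where s: "s = (Gp, E, LB, UB)" by (cases s)
  have wf: "wf_graph P Gp E" and lb: "lower_bound P Gp LB" and ub: "bellman_upper P Gp UB"
    using maptree_reachable_inv[OF assms(7)] s by (auto simp: maptree_inv_def)
  obtain T where T: "nodes_ok P {1..nN P} T" "sol_of_tree P {1..nN P} 0 T = S"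
    and cost: "tree_cost P {1..nN P} 0 T \<le> UB (root P)"
    using get_solution_tree[OF assms(9) s ub] assms(1) by (auto simp: root_def)
  have terminated: "UB (root P) \<le> LB (root P)" using assms(8) s by (simp add: maptree_done_def)
  have "tree_cost P {1..nN P} 0 T \<le> tree_cost P {1..nN P} 0 T'"
    if "nodes_ok P {1..nN P} T'" for T'
    using cost terminated lb wf_graphD(1)[OF wf] that unfolding lower_bound_def root_def
    by (meson order_trans)
  then show ?thesis using T unnorm_post_le_iff_tree_cost_ge by blast
qed

end
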